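(* Let $Q = I \times J \subset \mathbb{W}$ be a rectangle and let $F \colon Q \to \mathbb{W}$ be a horizontal $(M,\epsilon)$-quasi-isometric embedding. Let $w_{1} = (y_{1},t_{1}), w_{2} = (y_{2},t_{2}) \in Q$ satisfy $|y_{2}-y_{1}| > \max\{8M\epsilon, 4M^{2}\|t_{1}-t_{2}\|\}$. Then $|\pi_{1}(F(w_{2})) - \pi_{1}(F(w_{1}))| \geq \frac{|y_{2}-y_{1}|}{2M}$.
   Context: $\mathbb{W}$ is $\mathbb{R}^{2}$ with the metric $d_{\mathrm{par}}((y,t),(\xi,\tau)) = \max\{|y-\xi|,|t-\tau|^{1/2}\}$; $\pi_{1}(y,t) = y$; horizontal lines in $\mathbb{W}$ are the sets $\mathbb{R} \times \{t\}$; $\|t_{1}-t_{2}\| := \sqrt{|t_{1}-t_{2}|}$. A map $F \colon (X,d) \to (Y,d')$ is an $(M,\epsilon)$-quasi-isometric embedding if $M^{-1}d(x,y) - \epsilon \leq d'(F(x),F(y)) \leq Md(x,y) + \epsilon$ for all $x,y$. $F \colon I \times J \to \mathbb{W}$ is a horizontal $(M,\epsilon)$-quasi-isometric embedding if it is an $(M,\epsilon)$-quasi-isometric embedding w.r.t. $d_{\mathrm{par}}$ and for every $t \in J$ there is a horizontal line $\ell_{t} \subset \mathbb{W}$ with $F(I \times \{t\}) \subset \ell_{t}$. *)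

theory Defs
  imports "HOL-Analysis.Analysis"
begin

text \<open>Points of the parabolic plane W = R^2 are pairs (y,t).\<close>

definition d_par :: "real \<times> real \<Rightarrow> real \<times> real \<Rightarrow> real" where
  "d_par p q = max \<bar>fst p - fst q\<bar> (sqrt \<bar>snd p - snd q\<bar>)"

definition pi1 :: "real \<times> real \<Rightarrow> real" where
  "pi1 p = fst p"

definition pnorm :: "real \<Rightarrow> real \<Rightarrow> real" where
  "pnorm t1 t2 = sqrt \<bar>t1 - t2\<bar>"

definition horizontal_line :: "(real \<times> real) set \<Rightarrow> bool" where
  "horizontal_line L \<longleftrightarrow> (\<exists>t. L = UNIV \<times> {t})"

definition qi_embedding_on ::
  "(real \<times> real) set \<Rightarrow> real \<Rightarrow> real \<Rightarrow> (real \<times> real \<Rightarrow> real \<times> real) \<Rightarrow> bool" where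
  "qi_embedding_on S M eps F \<longleftrightarrow>
     (\<forall>x\<in>S. \<forall>y\<in>S. d_par x y / M - eps \<le> d_par (F x) (F y)
                     \<and> d_par (F x) (F y) \<le> M * d_par x y + eps)"

definition horizontal_qi_embedding ::
  "real set \<Rightarrow> real set \<Rightarrow> real \<Rightarrow> real \<Rightarrow> (real \<times> real \<Rightarrow> real \<times> real) \<Rightarrow> bool" where
  "horizontal_qi_embedding I J M eps F \<longleftrightarrow>
     qi_embedding_on (I \<times> J) M eps F \<and>
     (\<forall>t\<in>J. \<exists>L. horizontal_line L \<and> F ` (I \<times> {t}) \<subseteq> L)"

end

theory Submission
  imports Defs
begin

(* Pass through the corner (y2,t1). Since F maps the horizontal line through w1 into a horizontal
   line, the distance between F(y1,t1) and F(y2,t1) is purely horizontal, hence at least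
   |y2 - y1|/M - eps. The vertical step from (y2,t1) to (y2,t2) moves the first coordinate of the
   image by at most M ||t1 - t2|| + eps. The hypothesis on |y2 - y1| makes each of the two error
   terms at most |y2 - y1|/(4M). *)

lemma d_par_same_time: "d_par (y, t) (y', t) = \<bar>y - y'\<bar>"
  by (simp add: d_par_def)

lemma d_par_same_abscissa: "d_par (y, t) (y, t') = pnorm t t'"
  by (simp add: d_par_def pnorm_def)

lemma abs_pi1_diff_le_d_par: "\<bar>pi1 p - pi1 q\<bar> \<le> d_par p q"
  by (simp add: d_par_def pi1_def)

lemma d_par_eq_abs_pi1_diff:
  assumes "snd p = snd q"
  shows "d_par p q = \<bar>pi1 p - pi1 q\<bar>"
  using assms by (simp add: d_par_def pi1_def)

lemma horizontal_qi_embedding_same_time: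
  assumes "horizontal_qi_embedding I J M eps F" and "t \<in> J" and "y \<in> I" and "y' \<in> I"
  shows "snd (F (y, t)) = snd (F (y', t))"
proof -
  obtain L where "horizontal_line L" and "F ` (I \<times> {t}) \<subseteq> L"
    using assms(1,2) unfolding horizontal_qi_embedding_def by blast
  then obtain c where "F ` (I \<times> {t}) \<subseteq> UNIV \<times> {c}"
    unfolding horizontal_line_def by blast
  then have "F (y, t) \<in> UNIV \<times> {c}" and "F (y', t) \<in> UNIV \<times> {c}"
    using assms(3,4) by auto
  then show ?thesis by auto
qed

lemma horizontal_qi_embedding_pi1_lower:
  assumes "horizontal_qi_embedding I J M eps F" and "t \<in> J" and "y \<in> I" and "y' \<in> I"
  shows "\<bar>pi1 (F (y, t)) - pi1 (F (y', t))\<bar> \<ge> \<bar>y - y'\<bar> / M - eps"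
proof -
  have "d_par (y, t) (y', t) / M - eps \<le> d_par (F (y, t)) (F (y', t))"
    using assms unfolding horizontal_qi_embedding_def qi_embedding_on_def by blast
  moreover have "d_par (F (y, t)) (F (y', t)) = \<bar>pi1 (F (y, t)) - pi1 (F (y', t))\<bar>"
    using horizontal_qi_embedding_same_time[OF assms] by (rule d_par_eq_abs_pi1_diff)
  ultimately show ?thesis by (simp add: d_par_same_time)
qed

lemma qi_embedding_pi1_upper_vertical:
  assumes "qi_embedding_on S M eps F" and "(y, t) \<in> S" and "(y, t') \<in> S"
  shows "\<bar>pi1 (F (y, t)) - pi1 (F (y, t'))\<bar> \<le> M * pnorm t t' + eps"
proof -
  have "d_par (F (y, t)) (F (y, t')) \<le> M * d_par (y, t) (y, t') + eps"
    using assms unfolding qi_embedding_on_def by blast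
  then show ?thesis
    using abs_pi1_diff_le_d_par[of "F (y, t)" "F (y, t')"] by (simp add: d_par_same_abscissa)
qed

theorem lemma3p18:
  fixes I J :: "real set" and M eps y1 t1 y2 t2 :: real
    and F :: "real \<times> real \<Rightarrow> real \<times> real"
  assumes "is_interval I" and "is_interval J"
    and "horizontal_qi_embedding I J M eps F"
    and "(y1, t1) \<in> I \<times> J" and "(y2, t2) \<in> I \<times> J"
    and "\<bar>y2 - y1\<bar> > max (8 * M * eps) (4 * M\<^sup>2 * pnorm t1 t2)"
  shows "\<bar>pi1 (F (y2, t2)) - pi1 (F (y1, t1))\<bar> \<ge> \<bar>y2 - y1\<bar> / (2 * M)"
proof (cases "M > 0")
  case False
  then show ?thesis by (smt (verit) abs_ge_zero divide_nonneg_nonpos)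
next
  case True
  define d where "d = \<bar>y2 - y1\<bar>"
  have corner: "(y2, t1) \<in> I \<times> J" using assms(4,5) by simp
  have horizontal: "\<bar>pi1 (F (y2, t1)) - pi1 (F (y1, t1))\<bar> \<ge> d / M - eps"
    using horizontal_qi_embedding_pi1_lower[OF assms(3)] assms(4,5) unfolding d_def by auto
  have vertical: "\<bar>pi1 (F (y2, t2)) - pi1 (F (y2, t1))\<bar> \<le> M * pnorm t1 t2 + eps"
    using qi_embedding_pi1_upper_vertical[OF _ assms(5) corner] assms(3)
    by (simp add: horizontal_qi_embedding_def pnorm_def abs_minus_commute)
  have "2 * eps < d / (4 * M)" and "M * pnorm t1 t2 < d / (4 * M)"
    using assms(6) True by (simp_all add: d_def field_simps power2_eq_square)
  moreover have "d / M - d / (4 * M) - d / (4 * M) = d / (2 * M)"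
    using True by (simp add: field_simps)
  ultimately show ?thesis using horizontal vertical unfolding d_def by linarith
qed

end
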